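(* For every integer $n\ge1$, the number of walks $0=y_0,y_1,\dots,y_n=1$ with $y_i-y_{i-1}\in\{-2,-1,+1,+2\}$ for all $i$ and $y_i\ge1$ for all $1\le i\le n$ (basketball walks of length $n$ from the origin to altitude $1$ never returning to the $x$-axis) equals $$\frac1n\sum_{k=1}^{n}(-1)^{k+1}\binom{2k-2}{k-1}\binom{2n}{n-k}=\frac1n\sum_{i=0}^{n}\binom ni\binom{n}{2n+1-3i}.$$
   Context: Binomial coefficients $\binom ab$ with $b<0$ or $b>a\ge0$ are $0$. *)

theory Defs
  imports Complex_Main
begin

definition binomz :: "nat \<Rightarrow> int \<Rightarrow> nat" where
  "binomz a b = (if b < 0 then 0 else a choose (nat b))"

definition basketball_walks :: "nat \<Rightarrow> int list set" where
  "basketball_walks n = {ys. length ys = n + 1 \<and> ys ! 0 = 0 \<and> ys ! n = 1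
     \<and> (\<forall>i\<in>{1..n}. ys ! i - ys ! (i - 1) \<in> {-2, -1, 1, 2})
     \<and> (\<forall>i\<in>{1..n}. ys ! i \<ge> 1)}"

end

theory Submission
  imports Defs "HOL-Computational_Algebra.Polynomial"
begin

text \<open>A basketball walk is determined by its steps, and the walks counted here are exactly the
  step sequences in \<open>{-2, -1, 1, 2}\<close> with sum 1 and all prefix sums positive. By the cycle
  lemma, exactly one of the \<open>n\<close> rotations of a step sequence with sum 1 has positive prefix
  sums, so \<open>n\<close> times the number of walks is the number of step sequences with sum 1.
  Writing a step as \<open>a + 3b - 2\<close> with bits \<open>a, b\<close>, that number is the coefficient of
  \<open>x^(2n+1)\<close> in \<open>(1 + x)^n (1 + x^3)^n\<close>, which is the second formula. The factorisation
  \<open>1 + x^3 = (1 + x)((1 + x)^2 - 3x)\<close> gives the same coefficient as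
  \<open>\<Sum>j. C(n,j) (-3)^(n-j) C(2n+2j, n+j-1)\<close>; this sum and the alternating sum of the first
  formula satisfy the same second-order recurrence, proved by creative telescoping, and agree
  for \<open>n = 1, 2\<close>.\<close>

section \<open>The cycle lemma\<close>

definition positive_prefix_sums :: "int list \<Rightarrow> bool" where
  "positive_prefix_sums xs \<longleftrightarrow> (\<forall>j\<in>{1..length xs}. 0 < sum_list (take j xs))"

lemma rotate_eq_drop_take: "r < length xs \<Longrightarrow> rotate r xs = drop r xs @ take r xs"
  by (simp add: rotate_drop_take)

lemma sum_list_rotate: "sum_list (rotate r xs) = sum_list (xs :: 'a :: comm_monoid_add list)"
  by (metis rotate_drop_take append_take_drop_id sum_list_append add.commute)

lemma sum_list_take_rotate:
  fixes xs :: "'a :: ab_group_add list"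
  assumes "r < length xs" "j \<le> length xs"
  shows "sum_list (take j (rotate r xs)) = sum_list (take (r + j) (xs @ xs)) - sum_list (take r (xs @ xs))"
proof -
  have "rotate r xs = take (length xs) (drop r (xs @ xs))"
    using assms by (simp add: rotate_eq_drop_take)
  then have "take j (rotate r xs) = take j (drop r (xs @ xs))"
    using assms(2) by (simp add: min_absorb1)
  moreover have "sum_list (take (r + j) (xs @ xs))
      = sum_list (take r (xs @ xs)) + sum_list (take j (drop r (xs @ xs)))"
    by (simp only: take_add sum_list_append)
  ultimately show ?thesis
    by simp
qed

lemma sum_list_take_append_self:
  fixes xs :: "'a :: comm_monoid_add list"
  assumes "m \<le> length xs"
  shows "sum_list (take (m + length xs) (xs @ xs)) = sum_list (take m (xs @ xs)) + sum_list xs"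
  using assms
  by (simp add: take_add add.commute)

lemma positive_prefix_sums_rotate_iff:
  assumes "r < length xs"
  shows "positive_prefix_sums (rotate r xs) \<longleftrightarrow>
    (\<forall>j\<in>{1..length xs}. sum_list (take r (xs @ xs)) < sum_list (take (r + j) (xs @ xs)))"
  using sum_list_take_rotate[OF assms] by (auto simp: positive_prefix_sums_def)

lemma positive_rotation_unique:
  assumes sum: "sum_list xs = 1" and "r < length xs" "r' < length xs"
    and "positive_prefix_sums (rotate r xs)" "positive_prefix_sums (rotate r' xs)"
  shows "r = r'"
proof -
  define n where "n = length xs"
  define S where "S m = sum_list (take m (xs @ xs))" for m
  have S_period: "S (m + n) = S m + 1" if "m < n" for m
    using sum_list_take_append_self[of m xs] that sum by (simp add: S_def n_def)
  \<comment> \<open>\<open>S\<close> rises by exactly 1 over a period, so \<open>S r < S r' < S r + 1\<close> is impossible.\<close>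
  have False if "r < r'" "r' < n" "positive_prefix_sums (rotate r xs)"
    "positive_prefix_sums (rotate r' xs)" for r r'
  proof -
    have "\<forall>j\<in>{1..n}. S r < S (r + j)" "\<forall>j\<in>{1..n}. S r' < S (r' + j)"
      using that positive_prefix_sums_rotate_iff[of r xs] positive_prefix_sums_rotate_iff[of r' xs]
      unfolding S_def n_def by auto
    moreover have "r' - r \<in> {1..n}" "n + r - r' \<in> {1..n}"
      using that by auto
    ultimately have "S r < S (r + (r' - r))" "S r' < S (r' + (n + r - r'))"
      by blast+
    moreover have "r' + (n + r - r') = r + n"
      using that by simp
    ultimately show False
      using that S_period[of r] by simp
  qed
  then show ?thesis
    using assms unfolding n_def by (metis linorder_neqE_nat)
qed

lemma positive_rotation_exists:
  assumes sum: "sum_list xs = 1"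
  obtains r where "r < length xs" "positive_prefix_sums (rotate r xs)"
proof -
  define n where "n = length xs"
  define S where "S m = sum_list (take m (xs @ xs))" for m
  have "n > 0"
    using sum by (cases xs) (auto simp: n_def)
  define M where "M = Min (S ` {..<n})"
  define r where "r = Max {j. j < n \<and> S j = M}"
  have M_le: "M \<le> S j" if "j < n" for j
    using that by (simp add: M_def)
  have "M \<in> S ` {..<n}"
    using \<open>n > 0\<close> unfolding M_def by (intro Min_in) auto
  then have "{j. j < n \<and> S j = M} \<noteq> {}"
    by auto
  then have r: "r < n" "S r = M"
    using Max_in[of "{j. j < n \<and> S j = M}"] by (auto simp: r_def)
  have r_last: "j \<le> r" if "j < n" "S j = M" for j
    using that unfolding r_def by (intro Max_ge) auto
  have "S r < S (r + j)" if j: "j \<in> {1..n}" for j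
  proof (cases "r + j < n")
    case True
    then show ?thesis
      using M_le[of "r + j"] r_last[of "r + j"] r j by fastforce
  next
    case False
    then have "r + j = (r + j - n) + n" "r + j - n < n"
      using r j by auto
    moreover have "S ((r + j - n) + n) = S (r + j - n) + 1"
      using sum_list_take_append_self[of "r + j - n" xs] calculation sum by (simp add: S_def n_def)
    ultimately show ?thesis
      using M_le[of "r + j - n"] r by simp
  qed
  then show thesis
    using that[of r] r positive_prefix_sums_rotate_iff[of r xs] by (simp add: S_def n_def)
qed

lemma card_filter_rotate:
  assumes "finite S" and len: "\<And>xs. xs \<in> S \<Longrightarrow> length xs = n" and "r < n"
    and closed: "\<And>xs r. xs \<in> S \<Longrightarrow> rotate r xs \<in> S"
  shows "card {xs \<in> S. P (rotate r xs)} = card {xs \<in> S. P xs}"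
proof (rule bij_betw_same_card[of "rotate r"], rule bij_betw_byWitness[where f' = "rotate (n - r)"])
  show "\<forall>xs\<in>{xs \<in> S. P (rotate r xs)}. rotate (n - r) (rotate r xs) = xs"
    using len \<open>r < n\<close> by (simp add: rotate_rotate)
  show "\<forall>xs\<in>{xs \<in> S. P xs}. rotate r (rotate (n - r) xs) = xs"
    using len \<open>r < n\<close> by (simp add: rotate_rotate)
qed (use closed len \<open>r < n\<close> in \<open>auto simp: rotate_rotate\<close>)

lemma card_filter_eq_sum: "finite A \<Longrightarrow> card {x \<in> A. P x} = (\<Sum>x\<in>A. if P x then 1 else 0)"
  using sum.inter_filter[of A "\<lambda>_. 1 :: nat" P] by simp

lemma card_rotation_invariant:
  assumes fin: "finite S" and len: "\<And>xs. xs \<in> S \<Longrightarrow> length xs = n"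
    and closed: "\<And>xs r. xs \<in> S \<Longrightarrow> rotate r xs \<in> S"
    and unique: "\<And>xs. xs \<in> S \<Longrightarrow> \<exists>!r. r < n \<and> P (rotate r xs)"
  shows "n * card {xs \<in> S. P xs} = card S"
proof -
  have "card {r \<in> {..<n}. P (rotate r xs)} = 1" if xs: "xs \<in> S" for xs
  proof -
    obtain r0 where "r0 < n" "P (rotate r0 xs)" "\<And>r. r < n \<Longrightarrow> P (rotate r xs) \<Longrightarrow> r = r0"
      using unique[OF xs] by blast
    then have "{r \<in> {..<n}. P (rotate r xs)} = {r0}"
      by fastforce
    then show ?thesis
      by simp
  qed
  then have "card S = (\<Sum>xs\<in>S. card {r \<in> {..<n}. P (rotate r xs)})"
    by simp
  also have "\<dots> = (\<Sum>xs\<in>S. \<Sum>r<n. if P (rotate r xs) then 1 else 0)"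
    by (simp only: card_filter_eq_sum[OF finite_lessThan])
  also have "\<dots> = (\<Sum>r<n. \<Sum>xs\<in>S. if P (rotate r xs) then 1 else 0)"
    by (rule sum.swap)
  also have "\<dots> = (\<Sum>r<n. card {xs \<in> S. P (rotate r xs)})"
    by (simp only: card_filter_eq_sum[OF fin])
  also have "\<dots> = (\<Sum>r<n. card {xs \<in> S. P xs})"
    by (intro sum.cong refl card_filter_rotate[OF fin len _ closed]) auto
  finally show ?thesis
    by simp
qed

section \<open>Basketball walks as step sequences\<close>

definition step_lists :: "nat \<Rightarrow> int list set" where
  "step_lists n = {xs. length xs = n \<and> set xs \<subseteq> {-2, -1, 1, 2} \<and> sum_list xs = 1}"

definition walk_of_steps :: "int list \<Rightarrow> int list" where
  "walk_of_steps xs = map (\<lambda>j. sum_list (take j xs)) [0..<Suc (length xs)]"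

definition steps_of_walk :: "int list \<Rightarrow> int list" where
  "steps_of_walk ys = map (\<lambda>i. ys ! Suc i - ys ! i) [0..<length ys - 1]"

lemma length_walk_of_steps [simp]: "length (walk_of_steps xs) = Suc (length xs)"
  by (simp add: walk_of_steps_def)

lemma nth_walk_of_steps: "j \<le> length xs \<Longrightarrow> walk_of_steps xs ! j = sum_list (take j xs)"
  by (simp add: walk_of_steps_def nth_append del: upt_Suc)

lemma length_steps_of_walk [simp]: "length (steps_of_walk ys) = length ys - 1"
  by (simp add: steps_of_walk_def)

lemma nth_steps_of_walk: "i < length ys - 1 \<Longrightarrow> steps_of_walk ys ! i = ys ! Suc i - ys ! i"
  by (simp add: steps_of_walk_def)

lemma sum_list_take_steps_of_walk:
  assumes "j < length ys"
  shows "sum_list (take j (steps_of_walk ys)) = ys ! j - ys ! 0"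
proof -
  have "take j (steps_of_walk ys) = map (\<lambda>i. ys ! Suc i - ys ! i) [0..<j]"
    using assms by (simp add: steps_of_walk_def take_map min_absorb2)
  then have "sum_list (take j (steps_of_walk ys)) = (\<Sum>i<j. ys ! Suc i - ys ! i)"
    by (simp add: sum_list_sum_nth atLeast0LessThan)
  then show ?thesis
    by (simp add: sum_lessThan_telescope)
qed

lemma walk_of_steps_diff:
  "k < length xs \<Longrightarrow> walk_of_steps xs ! Suc k - walk_of_steps xs ! k = xs ! k"
  by (simp add: nth_walk_of_steps take_Suc_conv_app_nth)

lemma steps_of_walk_of_steps: "steps_of_walk (walk_of_steps xs) = xs"
  by (rule nth_equalityI)
    (simp_all add: nth_steps_of_walk nth_walk_of_steps take_Suc_conv_app_nth)

lemma walk_of_steps_of_walk: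
  assumes "ys \<noteq> []" "ys ! 0 = 0"
  shows "walk_of_steps (steps_of_walk ys) = ys"
  by (rule nth_equalityI)
    (use assms in \<open>simp_all add: nth_walk_of_steps sum_list_take_steps_of_walk\<close>)

lemma bij_betw_walk_of_steps:
  "bij_betw walk_of_steps {xs \<in> step_lists n. positive_prefix_sums xs} (basketball_walks n)"
proof (rule bij_betw_byWitness[where f' = steps_of_walk])
  show "\<forall>xs\<in>{xs \<in> step_lists n. positive_prefix_sums xs}. steps_of_walk (walk_of_steps xs) = xs"
    by (simp add: steps_of_walk_of_steps)
  show "\<forall>ys\<in>basketball_walks n. walk_of_steps (steps_of_walk ys) = ys"
  proof
    fix ys assume "ys \<in> basketball_walks n"
    then have "ys \<noteq> []" "ys ! 0 = 0"
      by (auto simp: basketball_walks_def)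
    then show "walk_of_steps (steps_of_walk ys) = ys"
      by (rule walk_of_steps_of_walk)
  qed
  show "walk_of_steps ` {xs \<in> step_lists n. positive_prefix_sums xs} \<subseteq> basketball_walks n"
  proof clarify
    fix xs assume xs: "xs \<in> step_lists n" "positive_prefix_sums xs"
    then have len: "length xs = n" and steps: "set xs \<subseteq> {-2, -1, 1, 2}" and sum: "sum_list xs = 1"
      by (auto simp: step_lists_def)
    have "walk_of_steps xs ! i - walk_of_steps xs ! (i - 1) \<in> {-2, -1, 1, 2}" if "i \<in> {1..n}" for i
    proof -
      have "xs ! (i - 1) \<in> set xs"
        using that len by auto
      then have "xs ! (i - 1) \<in> {-2, -1, 1, 2}"
        using steps by blast
      moreover have "walk_of_steps xs ! i - walk_of_steps xs ! (i - 1) = xs ! (i - 1)"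
        using that len walk_of_steps_diff[of "i - 1" xs] by auto
      ultimately show ?thesis
        by simp
    qed
    moreover have "1 \<le> walk_of_steps xs ! i" if "i \<in> {1..n}" for i
    proof -
      have "0 < sum_list (take i xs)"
        using xs(2) that len unfolding positive_prefix_sums_def by auto
      then show ?thesis
        using nth_walk_of_steps[of i xs] that len by simp
    qed
    ultimately show "walk_of_steps xs \<in> basketball_walks n"
      using len sum by (auto simp: basketball_walks_def nth_walk_of_steps)
  qed
  show "steps_of_walk ` basketball_walks n \<subseteq> {xs \<in> step_lists n. positive_prefix_sums xs}"
  proof clarify
    fix ys assume "ys \<in> basketball_walks n"
    then have len: "length ys = Suc n" and start: "ys ! 0 = 0" and "ys ! n = 1"
      and steps: "\<And>i. i \<in> {1..n} \<Longrightarrow> ys ! i - ys ! (i - 1) \<in> {-2, -1, 1, 2}"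
      and pos: "\<And>i. i \<in> {1..n} \<Longrightarrow> 1 \<le> ys ! i"
      by (auto simp: basketball_walks_def)
    have "set (steps_of_walk ys) \<subseteq> {-2, -1, 1, 2}"
    proof
      fix x assume "x \<in> set (steps_of_walk ys)"
      then obtain i where "i < n" "x = ys ! Suc i - ys ! i"
        using len by (auto simp: steps_of_walk_def)
      then show "x \<in> {-2, -1, 1, 2}"
        using steps[of "Suc i"] by simp
    qed
    moreover have "sum_list (steps_of_walk ys) = 1"
      using sum_list_take_steps_of_walk[of n ys] len start \<open>ys ! n = 1\<close> by simp
    moreover have "0 < sum_list (take j (steps_of_walk ys))" if "j \<in> {1..n}" for j
      using sum_list_take_steps_of_walk[of j ys] len start pos[OF that] that by simp
    ultimately show "steps_of_walk ys \<in> step_lists n \<and> positive_prefix_sums (steps_of_walk ys)"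
      using len by (simp add: step_lists_def positive_prefix_sums_def)
  qed
qed

section \<open>Counting step sequences with sum 1\<close>

text \<open>A step \<open>x \<in> {-2, -1, 1, 2}\<close> is \<open>a + 3b - 2\<close> for the bits \<open>a = [x \<in> {-1, 2}]\<close> and
  \<open>b = [x \<in> {1, 2}]\<close>. A step list of length \<open>n\<close> is encoded by the sets \<open>B\<close> and \<open>A\<close> of
  positions where \<open>b\<close> resp. \<open>a\<close> is set; sum 1 becomes \<open>|A| + 3|B| = 2n + 1\<close>.\<close>

definition bit_set_pairs :: "nat \<Rightarrow> (nat set \<times> nat set) set" where
  "bit_set_pairs n = (SIGMA B:Pow {..<n}. {A. A \<subseteq> {..<n} \<and> int (card A) = 2 * int n + 1 - 3 * int (card B)})"

definition bit_sets_of_steps :: "nat \<Rightarrow> int list \<Rightarrow> nat set \<times> nat set" where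
  "bit_sets_of_steps n xs = ({i. i < n \<and> xs ! i \<in> {1, 2}}, {i. i < n \<and> xs ! i \<in> {-1, 2}})"

definition steps_of_bit_sets :: "nat \<Rightarrow> nat set \<times> nat set \<Rightarrow> int list" where
  "steps_of_bit_sets n = (\<lambda>(B, A). map (\<lambda>i. of_bool (i \<in> A) + 3 * of_bool (i \<in> B) - 2) [0..<n])"

lemma sum_list_steps_of_bit_sets:
  assumes "B \<subseteq> {..<n}" "A \<subseteq> {..<n}"
  shows "sum_list (steps_of_bit_sets n (B, A)) = int (card A) + 3 * int (card B) - 2 * int n"
proof -
  have "sum_list (steps_of_bit_sets n (B, A))
      = (\<Sum>i<n. of_bool (i \<in> A)) + 3 * (\<Sum>i<n. of_bool (i \<in> B)) - (\<Sum>i<n. 2 :: int)"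
    by (simp add: steps_of_bit_sets_def sum_list_sum_nth atLeast0LessThan sum.distrib
        sum_subtractf sum_distrib_left)
  also have "\<dots> = int (card A) + 3 * int (card B) - 2 * int n"
    using assms by (simp add: Int_absorb1 Int_def[symmetric])
  finally show ?thesis .
qed

lemma steps_of_bit_sets_of_steps:
  assumes "xs \<in> step_lists n"
  shows "steps_of_bit_sets n (bit_sets_of_steps n xs) = xs"
proof -
  have "length xs = n" "set xs \<subseteq> {-2, -1, 1, 2}"
    using assms by (auto simp: step_lists_def)
  then show ?thesis
    by (intro nth_equalityI)
      (auto simp: steps_of_bit_sets_def bit_sets_of_steps_def dest!: nth_mem)
qed

lemma bij_betw_bit_sets_of_steps: "bij_betw (bit_sets_of_steps n) (step_lists n) (bit_set_pairs n)"
proof (rule bij_betw_byWitness[where f' = "steps_of_bit_sets n"])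
  show "\<forall>xs\<in>step_lists n. steps_of_bit_sets n (bit_sets_of_steps n xs) = xs"
    by (simp add: steps_of_bit_sets_of_steps)
  show "\<forall>p\<in>bit_set_pairs n. bit_sets_of_steps n (steps_of_bit_sets n p) = p"
    by (auto simp: bit_set_pairs_def bit_sets_of_steps_def steps_of_bit_sets_def of_bool_def
        split: if_splits)
  show "bit_sets_of_steps n ` step_lists n \<subseteq> bit_set_pairs n"
  proof (rule image_subsetI)
    fix xs assume xs: "xs \<in> step_lists n"
    obtain B A where BA: "bit_sets_of_steps n xs = (B, A)"
      by fastforce
    then have sets: "B \<subseteq> {..<n}" "A \<subseteq> {..<n}"
      by (auto simp: bit_sets_of_steps_def)
    have "sum_list (steps_of_bit_sets n (B, A)) = 1"
      using steps_of_bit_sets_of_steps[OF xs] xs BA by (simp add: step_lists_def)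
    then have "int (card A) + 3 * int (card B) - 2 * int n = 1"
      using sum_list_steps_of_bit_sets[OF sets] by simp
    then show "bit_sets_of_steps n xs \<in> bit_set_pairs n"
      using sets BA by (simp add: bit_set_pairs_def)
  qed
  show "steps_of_bit_sets n ` bit_set_pairs n \<subseteq> step_lists n"
  proof (rule image_subsetI, clarify)
    fix B A assume "(B, A) \<in> bit_set_pairs n"
    then have sets: "B \<subseteq> {..<n}" "A \<subseteq> {..<n}"
      and card: "int (card A) = 2 * int n + 1 - 3 * int (card B)"
      by (auto simp: bit_set_pairs_def)
    have "set (steps_of_bit_sets n (B, A)) \<subseteq> {-2, -1, 1, 2}"
      by (auto simp: steps_of_bit_sets_def of_bool_def split: if_splits)
    then show "steps_of_bit_sets n (B, A) \<in> step_lists n"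
      using sum_list_steps_of_bit_sets[OF sets] card
      by (simp add: step_lists_def steps_of_bit_sets_def)
  qed
qed

lemma card_subsets_int_card: "card {A. A \<subseteq> {..<n} \<and> int (card A) = m} = binomz n m"
proof (cases "m < 0")
  case True
  then show ?thesis
    by (simp add: binomz_def)
next
  case False
  then have "{A. A \<subseteq> {..<n} \<and> int (card A) = m} = {A. A \<subseteq> {..<n} \<and> card A = nat m}"
    by auto
  then show ?thesis
    using False n_subsets[of "{..<n}" "nat m"] by (simp add: binomz_def)
qed

lemma sum_Pow_lessThan_card: "(\<Sum>B\<in>Pow {..<n}. f (card B)) = (\<Sum>t\<le>n. (n choose t) * f t)"
proof -
  have "card ` Pow {..<n} \<subseteq> {..n}"
    using card_mono[OF finite_lessThan[of n]] by fastforce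
  then have "(\<Sum>B\<in>Pow {..<n}. f (card B)) = (\<Sum>t\<le>n. \<Sum>B\<in>{B \<in> Pow {..<n}. card B = t}. f (card B))"
    by (intro sum.group[symmetric]) auto
  also have "\<dots> = (\<Sum>t\<le>n. card {B. B \<subseteq> {..<n} \<and> card B = t} * f t)"
    by (intro sum.cong refl) simp
  also have "\<dots> = (\<Sum>t\<le>n. (n choose t) * f t)"
    by (simp add: n_subsets)
  finally show ?thesis .
qed

lemma card_bit_set_pairs:
  "card (bit_set_pairs n) = (\<Sum>t\<le>n. (n choose t) * binomz n (2 * int n + 1 - 3 * int t))"
proof -
  have "card (bit_set_pairs n)
      = (\<Sum>B\<in>Pow {..<n}. card {A. A \<subseteq> {..<n} \<and> int (card A) = 2 * int n + 1 - 3 * int (card B)})"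
    unfolding bit_set_pairs_def by (rule card_SigmaI) auto
  then show ?thesis
    using sum_Pow_lessThan_card[of "\<lambda>t. binomz n (2 * int n + 1 - 3 * int t)" n]
    by (simp add: card_subsets_int_card)
qed

lemma finite_step_lists: "finite (step_lists n)"
proof (rule finite_subset)
  show "step_lists n \<subseteq> {xs. set xs \<subseteq> {-2, -1, 1, 2} \<and> length xs = n}"
    by (auto simp: step_lists_def)
qed (simp add: finite_lists_length_eq)

lemma card_basketball_walks:
  "n * card (basketball_walks n) = (\<Sum>t\<le>n. (n choose t) * binomz n (2 * int n + 1 - 3 * int t))"
proof -
  have "n * card {xs \<in> step_lists n. positive_prefix_sums xs} = card (step_lists n)"
  proof (rule card_rotation_invariant[OF finite_step_lists])
    fix xs assume xs: "xs \<in> step_lists n"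
    then show "length xs = n"
      by (simp add: step_lists_def)
    show "rotate r xs \<in> step_lists n" for r
      using xs by (simp add: step_lists_def sum_list_rotate)
    have "sum_list xs = 1"
      using xs by (simp add: step_lists_def)
    then show "\<exists>!r. r < n \<and> positive_prefix_sums (rotate r xs)"
      using positive_rotation_exists positive_rotation_unique \<open>length xs = n\<close> by metis
  qed
  then show ?thesis
    using bij_betw_same_card[OF bij_betw_walk_of_steps] bij_betw_same_card[OF bij_betw_bit_sets_of_steps]
      card_bit_set_pairs by simp
qed

section \<open>A common recurrence for the two binomial sums\<close>

lemma fact_add_one: "(fact (m+1)::real) = (real m+1)*fact m"
  by (simp add: fact_Suc)

lemma fact_add_two: "(fact (m+2)::real) = (real m+2)*(real m+1)*fact m"
  by (simp add: fact_Suc eval_nat_numeral algebra_simps)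

lemma fact_add_three: "(fact (m+3)::real) = (real m+3)*(real m+2)*(real m+1)*fact m"
  by (simp add: fact_Suc eval_nat_numeral algebra_simps)

lemma fact_add_four: "(fact (m+4)::real) = (real m+4)*(real m+3)*(real m+2)*(real m+1)*fact m"
  by (simp add: fact_Suc eval_nat_numeral algebra_simps)

lemma central_binomial_fact: "real ((2*k) choose k) = fact (2*k) / (fact k)^2"
  by (subst binomial_fact) (auto simp: power2_eq_square)

lemma telescoping_step_from_certificate:
  fixes B c y s q0 q1 :: "'a :: field"
  assumes "c \<noteq> 0" and "c * (s + q0) + y * q1 = 0"
  shows "B * s = B * (- y / c) * q1 - B * q0"
proof -
  have "c * s = - (y * q1) - c * q0"
    using assms(2) by (simp add: algebra_simps eq_neg_iff_add_eq_0 add.assoc)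
  then have "s = - y / c * q1 - q0"
    using assms(1) by (simp add: field_simps)
  then show ?thesis
    by (simp add: right_diff_distrib mult.assoc)
qed

lemma second_order_recurrence_unique:
  fixes a b :: "nat \<Rightarrow> 'a :: field"
  assumes lead: "\<And>n. 1 \<le> n \<Longrightarrow> c2 n \<noteq> 0"
    and rec_a: "\<And>n. 1 \<le> n \<Longrightarrow> c0 n * a n + c1 n * a (n + 1) + c2 n * a (n + 2) = 0"
    and rec_b: "\<And>n. 1 \<le> n \<Longrightarrow> c0 n * b n + c1 n * b (n + 1) + c2 n * b (n + 2) = 0"
    and init: "a 1 = b 1" "a 2 = b 2"
  shows "1 \<le> n \<Longrightarrow> a n = b n"
proof (induction n rule: less_induct)
  case (less n)
  show ?case
  proof (cases "n \<le> 2")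
    case True
    then have "n = 1 \<or> n = 2"
      using less.prems by auto
    then show ?thesis
      using init by auto
  next
    case False
    then obtain m where m: "n = m + 2" "1 \<le> m"
      by (intro that[of "n - 2"]) auto
    then have "a m = b m" "a (m + 1) = b (m + 1)"
      using less.IH by auto
    moreover have "c0 m * a m + c1 m * a (m + 1) + c2 m * a (m + 2)
        = c0 m * b m + c1 m * b (m + 1) + c2 m * b (m + 2)"
      using rec_a[OF m(2)] rec_b[OF m(2)] by simp
    ultimately have "c2 m * a (m + 2) = c2 m * b (m + 2)"
      by simp
    then show ?thesis
      using lead[OF m(2)] m(1) by simp
  qed
qed

text \<open>The recurrence \<open>rec_coeff0 n * a n + rec_coeff1 n * a (n+1) + rec_coeff2 n * a (n+2) = 0\<close>
  and the rational certificates \<open>alt_cert\<close>, \<open>neg3_cert\<close> below were found by Zeilberger's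
  algorithm. For each sum, the three shifted summands are polynomial multiples of one
  hypergeometric base term, and the recurrence applied to the summands telescopes against
  the antidifference \<open>base * cert\<close>, which vanishes at both ends of the summation range.\<close>

definition rec_coeff0 :: "real \<Rightarrow> real" where
  "rec_coeff0 n = -18 * (11 + 38*n + 37*n^2 + 10*n^3)"

definition rec_coeff1 :: "real \<Rightarrow> real" where
  "rec_coeff1 n = -120 - 220*n - 147*n^2 - 35*n^3"

definition rec_coeff2 :: "real \<Rightarrow> real" where
  "rec_coeff2 n = 60 + 134*n + 94*n^2 + 20*n^3"

definition alt_term :: "nat \<Rightarrow> nat \<Rightarrow> real" where
  "alt_term n k = (if k < n then (-1)^k * real ((2*k) choose k) * real ((2*n) choose (n-k-1)) else 0)"
definition alt_base :: "nat \<Rightarrow> nat \<Rightarrow> real" where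
  "alt_base n k = (-1)^k * (fact (2*k) / (fact k)^2) * (fact (2*n) / (fact (n+2-k) * fact (n+k+3)))"

lemma alt_term_shift0_eq:
  assumes "k \<le> n+2"
  shows "alt_term n k = alt_base n k * ((real n+2-real k)*(real n+1-real k)*(real n-real k)*(real n+real k+3)*(real n+real k+2))"
proof (cases "k < n")
  case True
  then obtain d where n: "n = k + d + 1"
    by (metis add.commute add_Suc less_imp_Suc_add Suc_eq_plus1)
  define M where "M = 2*k+d"
  have b: "real ((2*n) choose (n-k-1)) = fact (2*n) / (fact d * ((real M+2)*(real M+1)*fact M))"
    by (subst binomial_fact) (auto simp: n M_def fact_add_two[symmetric] ac_simps)
  have e1: "n+2-k = d+3" "n+k+3 = M+4"
    using n by (auto simp: M_def)
  have e2: "real n = real k + real d + 1" "real M = 2*real k + real d"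
    using n by (auto simp: M_def)
  have "alt_term n k = (-1)^k * real ((2*k) choose k) * real ((2*n) choose (n-k-1))"
    using True by (simp add: alt_term_def)
  also have "\<dots> = (-1)^k * (fact (2*k) / (fact k)^2) * (fact (2*n) / (fact d * ((real M+2)*(real M+1)*fact M)))"
    unfolding b central_binomial_fact ..
  also have "\<dots> = alt_base n k * ((real n+2-real k)*(real n+1-real k)*(real n-real k)*(real n+real k+3)*(real n+real k+2))"
    unfolding alt_base_def e1 fact_add_three fact_add_four
    by (simp add: divide_simps add_pos_pos del: of_nat_add) (simp add: e2 algebra_simps)
  finally show ?thesis .
next
  case False
  then have "k = n \<or> k = n+1 \<or> k = n+2"
    using assms by auto
  then show ?thesis
    using False unfolding alt_term_def by auto
qed

lemma alt_term_shift1_eq: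
  assumes "k \<le> n+2"
  shows "alt_term (n+1) k = alt_base n k * ((2*real n+1)*(2*real n+2)*(real n+2-real k)*(real n+1-real k)*(real n+real k+3))"
proof (cases "k < n+1")
  case True
  then obtain d where n: "n = k + d"
    using le_Suc_ex by force
  define M where "M = 2*k+d"
  have b: "real ((2*(n+1)) choose (n+1-k-1)) = (2*real n+2)*(2*real n+1)*fact (2*n) / (fact d * ((real M+2)*(real M+1)*fact M))"
    by (subst binomial_fact) (auto simp: n M_def fact_add_two[symmetric] ac_simps)
  have e1: "n+2-k = d+2" "n+k+3 = M+3"
    using n by (auto simp: M_def)
  have e2: "real n = real k + real d" "real M = 2*real k + real d"
    using n by (auto simp: M_def)
  have "alt_term (n+1) k = (-1)^k * real ((2*k) choose k) * real ((2*(n+1)) choose (n+1-k-1))"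
    using True by (simp add: alt_term_def)
  also have "\<dots> = (-1)^k * (fact (2*k) / (fact k)^2) * ((2*real n+2)*(2*real n+1)*fact (2*n) / (fact d * ((real M+2)*(real M+1)*fact M)))"
    unfolding b central_binomial_fact ..
  also have "\<dots> = alt_base n k * ((2*real n+1)*(2*real n+2)*(real n+2-real k)*(real n+1-real k)*(real n+real k+3))"
    unfolding alt_base_def e1 fact_add_three fact_add_two
    by (simp add: divide_simps add_pos_pos del: of_nat_add) (simp add: e2 algebra_simps)
  finally show ?thesis .
next
  case False
  then have "k = n+1 \<or> k = n+2"
    using assms by auto
  then show ?thesis
    using False unfolding alt_term_def by auto
qed

lemma alt_term_shift2_eq:
  assumes "k \<le> n+2"
  shows "alt_term (n+2) k = alt_base n k * ((2*real n+1)*(2*real n+2)*(2*real n+3)*(2*real n+4)*(real n+2-real k))"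
proof (cases "k < n+2")
  case True
  then obtain d where n: "n+1 = k + d"
    using le_Suc_ex by force
  define M where "M = 2*k+d"
  have f4: "fact (2*n+4) = (2*real n+4)*(2*real n+3)*(2*real n+2)*(2*real n+1)*fact (2*n)"
    using fact_add_four[of "2*n"] by (simp add: algebra_simps)
  have b: "real ((2*(n+2)) choose (n+2-k-1)) = (2*real n+4)*(2*real n+3)*(2*real n+2)*(2*real n+1)*fact (2*n) / (fact d * fact (M+2))"
  proof -
    have i: "n+2-k-1 = d" "2*(n+2) = 2*n+4" "2*n+4-d = M+2"
      using n by (auto simp: M_def)
    show ?thesis
      unfolding i f4[symmetric] using n by (subst binomial_fact) (auto simp: i)
  qed
  have e1: "n+2-k = d+1" "n+k+3 = M+2"
    using n by (auto simp: M_def)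
  have e2: "real n = real k + real d - 1" "real M = 2*real k + real d"
    using n by (auto simp: M_def)
  have "alt_term (n+2) k = (-1)^k * real ((2*k) choose k) * real ((2*(n+2)) choose (n+2-k-1))"
    using True by (simp add: alt_term_def)
  also have "\<dots> = (-1)^k * (fact (2*k) / (fact k)^2) * ((2*real n+4)*(2*real n+3)*(2*real n+2)*(2*real n+1)*fact (2*n) / (fact d * fact (M+2)))"
    unfolding b central_binomial_fact ..
  also have "\<dots> = alt_base n k * ((2*real n+1)*(2*real n+2)*(2*real n+3)*(2*real n+4)*(real n+2-real k))"
    unfolding alt_base_def e1 fact_add_one
    by (simp add: divide_simps add_pos_pos del: of_nat_add) (use e2 in \<open>simp add: algebra_simps\<close>)
  finally show ?thesis .
next
  case False
  then have "k = n+2"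
    using assms by auto
  then show ?thesis
    using False unfolding alt_term_def by auto
qed

lemma alt_base_Suc:
  assumes "k \<le> n+1"
  shows "alt_base n (k+1) = alt_base n k * (-(2*(2*real k+1)*(real n+2-real k))/((real k+1)*(real n+real k+4)))"
proof -
  obtain d where n: "n+1 = k + d"
    using assms le_Suc_ex by force
  have e: "n+2-(k+1) = d" "n+2-k = d+1" "n+(k+1)+3 = (n+k+3)+1" "2*(k+1) = 2*k+2"
    using n by auto
  have e2: "real d = real n + 1 - real k"
    using n by (metis add_diff_cancel_left' of_nat_1 of_nat_add)
  show ?thesis unfolding alt_base_def e fact_add_one fact_add_two
    by (simp add: divide_simps add_pos_pos del: of_nat_add) (simp add: e2 algebra_simps power2_eq_square)
qed

definition alt_cert :: "real \<Rightarrow> real \<Rightarrow> real" where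
  "alt_cert n k = (- 576*k - 1092*k^2 - 102*k^3 + 264*k^4 + 66*k^5 - 2952*n*k
    - 5342*n*k^2 - 492*n*k^3 + 1022*n*k^4 + 228*n*k^5 - 5780*n^2*k
    - 9840*n^2*k^2 - 888*n^2*k^3 + 1268*n^2*k^4 + 222*n^2*k^5 - 5640*n^3*k
    - 8956*n^3*k^2 - 780*n^3*k^3 + 610*n^3*k^4 + 60*n^3*k^5 - 2924*n^4*k
    - 4316*n^4*k^2 - 342*n^4*k^3 + 100*n^4*k^4 - 768*n^5*k - 1050*n^5*k^2
    - 60*n^5*k^3 - 80*n^6*k - 100*n^6*k^2)"

lemma alt_certificate_identity:
  "(k+1)*(n+k+4)*(rec_coeff0 n * ((n+2-k)*(n+1-k)*(n-k)*(n+k+3)*(n+k+2))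
    + rec_coeff1 n * ((2*n+1)*(2*n+2)*(n+2-k)*(n+1-k)*(n+k+3))
    + rec_coeff2 n * ((2*n+1)*(2*n+2)*(2*n+3)*(2*n+4)*(n+2-k)) + alt_cert n k)
    + 2*(2*k+1)*(n+2-k)*alt_cert n (k+1) = 0"
  unfolding alt_cert_def rec_coeff0_def rec_coeff1_def rec_coeff2_def by algebra

definition alt_antidiff :: "nat \<Rightarrow> nat \<Rightarrow> real" where
  "alt_antidiff n k = (if k \<le> n+2 then alt_base n k * alt_cert (real n) (real k) else 0)"

lemma alt_antidiff_Suc:
  assumes "k \<le> n+2"
  shows "alt_antidiff n (k+1) = alt_base n k * (-(2*(2*real k+1)*(real n+2-real k))/((real k+1)*(real n+real k+4))) * alt_cert (real n) (real k + 1)"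
proof (cases "k \<le> n+1")
  case True
  then show ?thesis
    unfolding alt_antidiff_def using alt_base_Suc[OF True] by (simp add: add.commute)
next
  case False
  then have "k = n+2"
    using assms by auto
  then show ?thesis
    unfolding alt_antidiff_def by simp
qed

lemma alt_telescoping:
  assumes "k \<le> n + 2"
  shows "rec_coeff0 n * alt_term n k + rec_coeff1 n * alt_term (n+1) k + rec_coeff2 n * alt_term (n+2) k
    = alt_antidiff n (k+1) - alt_antidiff n k"
proof -
  define p0 where "p0 = (real n+2-real k)*(real n+1-real k)*(real n-real k)*(real n+real k+3)*(real n+real k+2)"
  define p1 where "p1 = (2*real n+1)*(2*real n+2)*(real n+2-real k)*(real n+1-real k)*(real n+real k+3)"
  define p2 where "p2 = (2*real n+1)*(2*real n+2)*(2*real n+3)*(2*real n+4)*(real n+2-real k)"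
  define c where "c = (real k+1)*(real n+real k+4)"
  define y where "y = 2*(2*real k+1)*(real n+2-real k)"
  have "rec_coeff0 n * alt_term n k + rec_coeff1 n * alt_term (n+1) k + rec_coeff2 n * alt_term (n+2) k
      = alt_base n k * (rec_coeff0 n * p0 + rec_coeff1 n * p1 + rec_coeff2 n * p2)"
    unfolding alt_term_shift0_eq[OF assms] alt_term_shift1_eq[OF assms] alt_term_shift2_eq[OF assms]
      p0_def p1_def p2_def
    by (simp add: algebra_simps)
  also have "\<dots> = alt_base n k * (- y / c) * alt_cert n (real k + 1) - alt_base n k * alt_cert n k"
  proof (rule telescoping_step_from_certificate)
    show "c \<noteq> 0"
      by (simp add: c_def add_pos_pos)
    show "c * (rec_coeff0 n * p0 + rec_coeff1 n * p1 + rec_coeff2 n * p2 + alt_cert n k) + y * alt_cert n (real k + 1) = 0"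
      unfolding c_def p0_def p1_def p2_def y_def by (rule alt_certificate_identity)
  qed
  also have "\<dots> = alt_antidiff n (k+1) - alt_antidiff n k"
    unfolding alt_antidiff_Suc[OF assms] c_def y_def using assms by (simp add: alt_antidiff_def)
  finally show ?thesis .
qed

definition alt_sum :: "nat \<Rightarrow> real" where
  "alt_sum n = (\<Sum>k<n. (-1)^k * real ((2*k) choose k) * real ((2*n) choose (n-k-1)))"

lemma sum_alt_term_eq:
  assumes "m \<le> N"
  shows "(\<Sum>k<N. alt_term m k) = alt_sum m"
proof -
  have "(\<Sum>k<N. alt_term m k) = (\<Sum>k<m. alt_term m k)"
    by (rule sum.mono_neutral_right) (use assms in \<open>auto simp: alt_term_def\<close>)
  also have "\<dots> = alt_sum m"
    unfolding alt_sum_def alt_term_def by simp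
  finally show ?thesis .
qed

lemma alt_sum_recurrence:
  "rec_coeff0 n * alt_sum n + rec_coeff1 n * alt_sum (n+1) + rec_coeff2 n * alt_sum (n+2) = 0"
proof -
  have "(\<Sum>k<n+3. rec_coeff0 n * alt_term n k + rec_coeff1 n * alt_term (n+1) k + rec_coeff2 n * alt_term (n+2) k)
      = (\<Sum>k<n+3. alt_antidiff n (k+1) - alt_antidiff n k)"
    by (intro sum.cong refl alt_telescoping) simp
  also have "\<dots> = alt_antidiff n (n+3) - alt_antidiff n 0"
    using sum_lessThan_telescope[of "alt_antidiff n" "n+3"] by simp
  also have "\<dots> = 0"
    by (simp add: alt_antidiff_def alt_cert_def)
  finally show ?thesis
    by (simp add: sum.distrib sum_distrib_left[symmetric] sum_alt_term_eq)
qed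

definition neg3_term :: "nat \<Rightarrow> nat \<Rightarrow> real" where
  "neg3_term n j = (if j \<le> n then real (n choose j) * (-3)^(n-j) * real ((2*n+2*j) choose (n+j-1)) else 0)"
definition neg3_base :: "nat \<Rightarrow> nat \<Rightarrow> real" where
  "neg3_base n j = fact n / (fact j * fact (n+2-j)) * (-3)^(n+2-j) * (fact (2*(n+j)) / (fact (n+j+1) * fact (n+j+3)))"

lemma neg3_term_shift0_eq:
  assumes "j \<le> n+2" "n \<ge> 1"
  shows "neg3_term n j = neg3_base n j * ((real n+2-real j)*(real n+1-real j)*(real n+real j)*(real n+real j+1)*(real n+real j+2)*(real n+real j+3)/9)"
proof (cases "j \<le> n")
  case True
  then obtain d where n: "n = j + d"
    using le_Suc_ex by force
  obtain m where m: "n + j = m + 1"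
  proof
    show "n + j = (n+j-1) + 1"
      using assms(2) by simp
  qed
  have b1: "real (n choose j) = fact n / (fact j * fact d)"
    by (subst binomial_fact) (auto simp: n)
  have b2: "real ((2*n+2*j) choose (n+j-1)) = fact (2*(n+j)) / (fact m * fact (m+2))"
  proof -
    have i: "n+j-1 = m" "2*n+2*j = 2*(n+j)" "2*(n+j) - m = m+2"
      using m by auto
    show ?thesis
      unfolding i by (subst binomial_fact) (auto simp: i m)
  qed
  have e1: "n+2-j = d+2" "n+j+1 = m+2" "n+j+3 = m+4" "n-j = d"
    using n m by auto
  have e2a: "real n + real j = real m + 1"
    using m by (metis of_nat_add of_nat_1)
  have e2: "real n = real j + real d" "real m = real n + real j - 1"
    using e2a by (simp_all add: n)
  have "neg3_term n j = real (n choose j) * (-3)^(n-j) * real ((2*n+2*j) choose (n+j-1))"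
    using True by (simp add: neg3_term_def)
  also have "\<dots> = fact n / (fact j * fact d) * (-3)^d * (fact (2*(n+j)) / (fact m * fact (m+2)))"
    unfolding b1 b2 e1 ..
  also have "\<dots> = neg3_base n j * ((real n+2-real j)*(real n+1-real j)*(real n+real j)*(real n+real j+1)*(real n+real j+2)*(real n+real j+3)/9)"
    unfolding neg3_base_def e1 fact_add_two fact_add_four
    by (simp add: divide_simps add_pos_pos del: of_nat_add) (simp add: e2 algebra_simps power2_eq_square)
  finally show ?thesis .
next
  case False
  then have "j = n+1 \<or> j = n+2"
    using assms by auto
  then show ?thesis
    using False unfolding neg3_term_def by auto
qed

lemma neg3_term_shift1_eq:
  assumes "j \<le> n+2"
  shows "neg3_term (n+1) j = neg3_base n j * ((real n+1)*(real n+2-real j)*(2*(real n+real j)+1)*(2*(real n+real j)+2)*(real n+real j+1)*(real n+real j+3)/(-3))"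
proof (cases "j \<le> n+1")
  case True
  then obtain d where n: "n+1 = j + d"
    using le_Suc_ex by force
  define m where "m = n+j"
  have b1: "real ((n+1) choose j) = (real n+1)*fact n / (fact j * fact d)"
    by (subst binomial_fact) (use n in \<open>auto simp: fact_add_one[symmetric]\<close>)
  have f2: "fact (2*m+2) = (2*real m+2)*(2*real m+1)*fact (2*m)"
    using fact_add_two[of "2*m"] by simp
  have b2: "real ((2*(n+1)+2*j) choose ((n+1)+j-1)) = (2*real m+2)*(2*real m+1)*fact (2*m) / (fact m * fact (m+2))"
  proof -
    have i: "(n+1)+j-1 = m" "2*(n+1)+2*j = 2*m+2" "2*m+2 - m = m+2"
      by (auto simp: m_def)
    show ?thesis
      unfolding i f2[symmetric] by (subst binomial_fact) (auto simp: i)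
  qed
  have e1: "n+2-j = d+1" "n+j+1 = m+1" "n+j+3 = m+3" "n+1-j = d" "n+j = m"
    using n by (auto simp: m_def)
  have e2: "real d = real n + 1 - real j" "real m = real n + real j"
    using n by (auto simp: m_def)
  have "neg3_term (n+1) j = real ((n+1) choose j) * (-3)^(n+1-j) * real ((2*(n+1)+2*j) choose ((n+1)+j-1))"
    using True by (simp add: neg3_term_def)
  also have "\<dots> = (real n+1)*fact n / (fact j * fact d) * (-3)^d * ((2*real m+2)*(2*real m+1)*fact (2*m) / (fact m * fact (m+2)))"
    unfolding b1 b2 e1 ..
  also have "\<dots> = neg3_base n j * ((real n+1)*(real n+2-real j)*(2*(real n+real j)+1)*(2*(real n+real j)+2)*(real n+real j+1)*(real n+real j+3)/(-3))"
    unfolding neg3_base_def e1 fact_add_one fact_add_two fact_add_three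
    by (simp add: divide_simps add_pos_pos del: of_nat_add) (simp add: e2 algebra_simps power2_eq_square)
  finally show ?thesis .
next
  case False
  then have "j = n+2"
    using assms by auto
  then show ?thesis
    using False unfolding neg3_term_def by auto
qed

lemma neg3_term_shift2_eq:
  assumes "j \<le> n+2"
  shows "neg3_term (n+2) j = neg3_base n j * ((real n+1)*(real n+2)*(2*(real n+real j)+1)*(2*(real n+real j)+2)*(2*(real n+real j)+3)*(2*(real n+real j)+4))"
proof -
  obtain d where n: "n+2 = j + d"
    using assms le_Suc_ex by force
  define m where "m = n+j"
  have b1: "real ((n+2) choose j) = (real n+2)*(real n+1)*fact n / (fact j * fact d)"
    by (subst binomial_fact) (use n assms in \<open>auto simp: fact_add_two[symmetric]\<close>)
  have f4: "fact (2*m+4) = (2*real m+4)*(2*real m+3)*(2*real m+2)*(2*real m+1)*fact (2*m)"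
    using fact_add_four[of "2*m"] by simp
  have b2: "real ((2*(n+2)+2*j) choose ((n+2)+j-1)) = (2*real m+4)*(2*real m+3)*(2*real m+2)*(2*real m+1)*fact (2*m) / (fact (m+1) * fact (m+3))"
  proof -
    have i: "(n+2)+j-1 = m+1" "2*(n+2)+2*j = 2*m+4" "2*m+4 - (m+1) = m+3"
      by (auto simp: m_def)
    show ?thesis
      unfolding i f4[symmetric] by (subst binomial_fact) (simp_all add: i ac_simps)
  qed
  have e1: "n+2-j = d" "n+j+1 = m+1" "n+j+3 = m+3" "n+j = m"
    using n by (auto simp: m_def)
  have e2: "real m = real n + real j"
    using n by (auto simp: m_def)
  have "neg3_term (n+2) j = real ((n+2) choose j) * (-3)^(n+2-j) * real ((2*(n+2)+2*j) choose ((n+2)+j-1))"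
    using assms by (simp add: neg3_term_def)
  also have "\<dots> = (real n+2)*(real n+1)*fact n / (fact j * fact d) * (-3)^d * ((2*real m+4)*(2*real m+3)*(2*real m+2)*(2*real m+1)*fact (2*m) / (fact (m+1) * fact (m+3)))"
    unfolding b1 b2 e1 ..
  also have "\<dots> = neg3_base n j * ((real n+1)*(real n+2)*(2*(real n+real j)+1)*(2*(real n+real j)+2)*(2*(real n+real j)+3)*(2*(real n+real j)+4))"
    unfolding neg3_base_def e1
    by (simp add: divide_simps add_pos_pos del: of_nat_add) (simp add: e2 algebra_simps power2_eq_square)
  finally show ?thesis .
qed

lemma neg3_base_Suc:
  assumes "j \<le> n+1"
  shows "neg3_base n (j+1) = neg3_base n j * (-((real n+2-real j)*(2*(real n+real j)+1)*(2*(real n+real j)+2))/(3*(real j+1)*(real n+real j+2)*(real n+real j+4)))"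
proof -
  obtain d where n: "n+1 = j + d"
    using assms le_Suc_ex by force
  define m where "m = n+j"
  have f2: "fact (2*m+2) = (2*real m+2)*(2*real m+1)*fact (2*m)"
    using fact_add_two[of "2*m"] by simp
  have e: "n+2-(j+1) = d" "n+2-j = d+1" "n+(j+1)+1 = (m+1)+1" "n+(j+1)+3 = (m+3)+1" "2*(n+(j+1)) = 2*m+2"
     "n+j+1 = m+1" "n+j+3 = m+3" "2*(n+j) = 2*m" using n by (auto simp: m_def)
  have e2: "real d = real n + 1 - real j" "real m = real n + real j"
    using n by (auto simp: m_def)
  show ?thesis unfolding neg3_base_def e fact_add_one f2
    by (simp add: divide_simps add_pos_pos del: of_nat_add) (simp add: e2 algebra_simps power2_eq_square)
qed

definition neg3_cert :: "real \<Rightarrow> real \<Rightarrow> real" where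
  "neg3_cert n j = (- 1008*j - 5268*j^2 - 7998*j^3 - 4746*j^4 - 1074*j^5 - 66*j^6
    - 8040*n*j - 31578*n*j^2 - 38708*n*j^3 - 19206*n*j^4
    - 3808*n*j^5 - 228*n*j^6 - 26280*n^2*j - 79654*n^2*j^2 - 77660*n^2*j^3
    - 30754*n^2*j^4 - 4834*n^2*j^5 - 222*n^2*j^6 - 46808*n^3*j
    - 109420*n^3*j^2 - 82108*n^3*j^3 - 24214*n^3*j^4 - 2600*n^3*j^5 - 60*n^3*j^6
    - 50072*n^4*j - 88116*n^4*j^2 - 47938*n^4*j^3 - 9320*n^4*j^4 - 500*n^4*j^5
    - 33020*n^5*j - 41430*n^5*j^2 - 14580*n^5*j^3 - 1400*n^5*j^4
    - 13100*n^6*j - 10490*n^6*j^2 - 1800*n^6*j^3 - 2852*n^7*j - 1100*n^7*j^2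
    - 260*n^8*j)"

lemma neg3_certificate_identity:
  "3*(j+1)*(n+j+2)*(n+j+4)*(rec_coeff0 n * ((n+2-j)*(n+1-j)*(n+j)*(n+j+1)*(n+j+2)*(n+j+3)/9)
    + rec_coeff1 n * ((n+1)*(n+2-j)*(2*(n+j)+1)*(2*(n+j)+2)*(n+j+1)*(n+j+3)/(-3))
    + rec_coeff2 n * ((n+1)*(n+2)*(2*(n+j)+1)*(2*(n+j)+2)*(2*(n+j)+3)*(2*(n+j)+4)) + neg3_cert n j)
    + (n+2-j)*(2*(n+j)+1)*(2*(n+j)+2)*neg3_cert n (j+1) = 0"
  unfolding neg3_cert_def rec_coeff0_def rec_coeff1_def rec_coeff2_def by algebra

definition neg3_antidiff :: "nat \<Rightarrow> nat \<Rightarrow> real" where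
  "neg3_antidiff n j = (if j \<le> n+2 then neg3_base n j * neg3_cert (real n) (real j) else 0)"

lemma neg3_antidiff_Suc:
  assumes "j \<le> n+2"
  shows "neg3_antidiff n (j+1) = neg3_base n j * (-((real n+2-real j)*(2*(real n+real j)+1)*(2*(real n+real j)+2))/(3*(real j+1)*(real n+real j+2)*(real n+real j+4))) * neg3_cert (real n) (real j + 1)"
proof (cases "j \<le> n+1")
  case True
  then show ?thesis
    unfolding neg3_antidiff_def using neg3_base_Suc[OF True] by (simp add: add.commute)
next
  case False
  then have "j = n+2"
    using assms by auto
  then show ?thesis
    unfolding neg3_antidiff_def by simp
qed

lemma neg3_telescoping:
  assumes "j \<le> n + 2" "1 \<le> n"
  shows "rec_coeff0 n * neg3_term n j + rec_coeff1 n * neg3_term (n+1) j + rec_coeff2 n * neg3_term (n+2) j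
    = neg3_antidiff n (j+1) - neg3_antidiff n j"
proof -
  define p0 where "p0 = (real n+2-real j)*(real n+1-real j)*(real n+real j)*(real n+real j+1)*(real n+real j+2)*(real n+real j+3)/9"
  define p1 where "p1 = (real n+1)*(real n+2-real j)*(2*(real n+real j)+1)*(2*(real n+real j)+2)*(real n+real j+1)*(real n+real j+3)/(-3)"
  define p2 where "p2 = (real n+1)*(real n+2)*(2*(real n+real j)+1)*(2*(real n+real j)+2)*(2*(real n+real j)+3)*(2*(real n+real j)+4)"
  define c where "c = 3*(real j+1)*(real n+real j+2)*(real n+real j+4)"
  define y where "y = (real n+2-real j)*(2*(real n+real j)+1)*(2*(real n+real j)+2)"
  have "rec_coeff0 n * neg3_term n j + rec_coeff1 n * neg3_term (n+1) j + rec_coeff2 n * neg3_term (n+2) j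
      = neg3_base n j * (rec_coeff0 n * p0 + rec_coeff1 n * p1 + rec_coeff2 n * p2)"
    unfolding neg3_term_shift0_eq[OF assms] neg3_term_shift1_eq[OF assms(1)] neg3_term_shift2_eq[OF assms(1)]
      p0_def p1_def p2_def
    by (simp add: algebra_simps)
  also have "\<dots> = neg3_base n j * (- y / c) * neg3_cert n (real j + 1) - neg3_base n j * neg3_cert n j"
  proof (rule telescoping_step_from_certificate)
    show "c \<noteq> 0"
      by (simp add: c_def add_pos_pos)
    show "c * (rec_coeff0 n * p0 + rec_coeff1 n * p1 + rec_coeff2 n * p2 + neg3_cert n j) + y * neg3_cert n (real j + 1) = 0"
      unfolding c_def p0_def p1_def p2_def y_def by (rule neg3_certificate_identity)
  qed
  also have "\<dots> = neg3_antidiff n (j+1) - neg3_antidiff n j"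
    unfolding neg3_antidiff_Suc[OF assms(1)] c_def y_def using assms by (simp add: neg3_antidiff_def)
  finally show ?thesis .
qed

definition neg3_sum :: "nat \<Rightarrow> real" where
  "neg3_sum n = (\<Sum>j\<le>n. real (n choose j) * (-3)^(n-j) * real ((2*n+2*j) choose (n+j-1)))"

lemma sum_neg3_term_eq:
  assumes "m < N"
  shows "(\<Sum>j<N. neg3_term m j) = neg3_sum m"
proof -
  have "(\<Sum>j<N. neg3_term m j) = (\<Sum>j\<le>m. neg3_term m j)"
    by (rule sum.mono_neutral_right) (use assms in \<open>auto simp: neg3_term_def\<close>)
  also have "\<dots> = neg3_sum m"
    unfolding neg3_sum_def neg3_term_def by simp
  finally show ?thesis .
qed

lemma neg3_sum_recurrence:
  assumes "1 \<le> n"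
  shows "rec_coeff0 n * neg3_sum n + rec_coeff1 n * neg3_sum (n+1) + rec_coeff2 n * neg3_sum (n+2) = 0"
proof -
  have "(\<Sum>j<n+3. rec_coeff0 n * neg3_term n j + rec_coeff1 n * neg3_term (n+1) j + rec_coeff2 n * neg3_term (n+2) j)
      = (\<Sum>j<n+3. neg3_antidiff n (j+1) - neg3_antidiff n j)"
    by (intro sum.cong refl neg3_telescoping[OF _ assms]) simp
  also have "\<dots> = neg3_antidiff n (n+3) - neg3_antidiff n 0"
    using sum_lessThan_telescope[of "neg3_antidiff n" "n+3"] by simp
  also have "\<dots> = 0"
    by (simp add: neg3_antidiff_def neg3_cert_def)
  finally show ?thesis
    by (simp add: sum.distrib sum_distrib_left[symmetric] sum_neg3_term_eq)
qed

lemma alt_sum_1_2: "alt_sum 1 = 1" "alt_sum 2 = 2"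
proof -
  have a: "(4::nat) choose 1 = 4" "(2::nat) choose 1 = 2"
    by code_simp+
  show "alt_sum 1 = 1"
    by (simp add: alt_sum_def)
  show "alt_sum 2 = 2"
    by (simp add: alt_sum_def numeral_eq_Suc lessThan_Suc a)
qed

lemma neg3_sum_1_2: "neg3_sum 1 = 1" "neg3_sum 2 = 2"
proof -
  have a: "(8::nat) choose 3 = 56" "(6::nat) choose 2 = 15" "(4::nat) choose 1 = 4"
    by code_simp+
  show "neg3_sum 1 = 1"
    by (simp add: neg3_sum_def atMost_Suc)
  show "neg3_sum 2 = 2"
    by (simp add: neg3_sum_def numeral_eq_Suc atMost_Suc a)
qed

lemma alt_sum_eq_neg3_sum: "1 \<le> n \<Longrightarrow> alt_sum n = neg3_sum n"
proof (rule second_order_recurrence_unique)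
  have "0 < rec_coeff2 (real m)" for m
    unfolding rec_coeff2_def by (simp add: add_pos_nonneg)
  then show "rec_coeff2 (real m) \<noteq> 0" for m
    by (metis less_irrefl)
qed (use alt_sum_recurrence neg3_sum_recurrence alt_sum_1_2 neg3_sum_1_2 in auto)

section \<open>The polynomial \<open>(1 + x)^n (1 + x^3)^n\<close>\<close>

lemma coeff_one_plus_X_power: "coeff ([:1, 1:] ^ n :: real poly) i = real (n choose i)"
proof (cases "i \<le> n")
  case True
  then show ?thesis
    using coeff_linear_poly_power[of i n "1 :: real" 1] by simp
next
  case False
  then have "coeff ([:1, 1:] ^ n :: real poly) i = 0"
    by (intro coeff_eq_0) (simp add: degree_linear_power)
  then show ?thesis
    using False by simp
qed

lemma one_plus_X_cube_factor: "(monom 1 3 + 1 :: real poly) = [:1, 1:] * ([:1, 1:]^2 + monom (-3) 1)"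
proof -
  have X: "([:1, 1:] :: real poly) = 1 + monom 1 1"
    by (simp add: monom_Suc one_pCons)
  have X3: "(monom 1 3 :: real poly) = monom 1 1 ^ 3"
    by (simp add: monom_power)
  have "(-3 * monom 1 1 :: real poly) = - (monom 3 0 * monom 1 1)"
    by (simp add: numeral_monom)
  then have X_3: "(monom (-3) 1 :: real poly) = -3 * monom 1 1"
    by (simp add: mult_monom minus_monom)
  show ?thesis
    unfolding X X3 X_3 by algebra
qed

lemma coeff_cube_product_binomz:
  "coeff ([:1, 1:] ^ n * (monom 1 3 + 1) ^ n :: real poly) (2 * n + 1)
    = (\<Sum>t\<le>n. real (n choose t) * real (binomz n (2 * int n + 1 - 3 * int t)))"
proof -
  have cube: "(monom 1 3 + 1 :: real poly) ^ n = (\<Sum>t\<le>n. smult (real (n choose t)) (monom 1 (3 * t)))"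
    by (subst binomial_ring) (simp add: monom_power of_nat_mult_conv_smult mult.commute)
  have "coeff ([:1, 1:] ^ n * (monom 1 3 + 1) ^ n :: real poly) (2 * n + 1)
      = (\<Sum>t\<le>n. real (n choose t) * (if 2 * n + 1 < 3 * t then 0 else real (n choose (2 * n + 1 - 3 * t))))"
    unfolding cube sum_distrib_left
    by (simp add: coeff_sum mult.commute[of "[:1, 1:] ^ n"] coeff_monom_mult)
      (simp only: coeff_one_plus_X_power mult_1 Suc_eq_plus1)
  also have "\<dots> = (\<Sum>t\<le>n. real (n choose t) * real (binomz n (2 * int n + 1 - 3 * int t)))"
  proof (intro sum.cong refl)
    fix t
    have "nat (2 * int n + 1 - 3 * int t) = 2 * n + 1 - 3 * t"
      by linarith
    moreover have "2 * int n + 1 - 3 * int t < 0 \<longleftrightarrow> 2 * n + 1 < 3 * t"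
      by linarith
    ultimately show "real (n choose t) * (if 2 * n + 1 < 3 * t then 0 else real (n choose (2 * n + 1 - 3 * t)))
        = real (n choose t) * real (binomz n (2 * int n + 1 - 3 * int t))"
      by (simp add: binomz_def)
  qed
  finally show ?thesis .
qed

lemma coeff_cube_product_neg3_sum:
  assumes "1 \<le> n"
  shows "coeff ([:1, 1:] ^ n * (monom 1 3 + 1) ^ n :: real poly) (2 * n + 1) = neg3_sum n"
proof -
  define Q where "Q = ([:1, 1:] ^ 2 + monom (-3) 1 :: real poly)"
  have "([:1, 1:] ^ n * (monom 1 3 + 1) ^ n :: real poly) = ([:1, 1:] * (monom 1 3 + 1)) ^ n"
    by (simp only: power_mult_distrib)
  also have "\<dots> = ([:1, 1:] ^ 2 * Q) ^ n"
    by (simp only: one_plus_X_cube_factor Q_def power2_eq_square mult.assoc)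
  also have "\<dots> = [:1, 1:] ^ (2 * n) * Q ^ n"
    by (simp only: power_mult_distrib power_mult)
  finally have cube: "([:1, 1:] ^ n * (monom 1 3 + 1) ^ n :: real poly) = [:1, 1:] ^ (2 * n) * Q ^ n" .
  have expand: "Q ^ n = (\<Sum>k\<le>n. smult (real (n choose k)) (monom ((-3) ^ (n - k)) (n - k) * [:1, 1:] ^ (2 * k)))"
    unfolding Q_def by (subst binomial_ring) (simp add: monom_power of_nat_mult_conv_smult mult.commute flip: power_mult)
  have "coeff ([:1, 1:] ^ n * (monom 1 3 + 1) ^ n :: real poly) (2 * n + 1)
      = (\<Sum>k\<le>n. real (n choose k) * (if 2 * n + 1 < n - k then 0
          else (-3) ^ (n - k) * coeff ([:1, 1:] ^ (2 * n + 2 * k)) (2 * n + 1 - (n - k))))"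
    unfolding cube expand sum_distrib_left
    by (simp add: coeff_sum mult.left_commute[of "[:1, 1:] ^ (2 * n)"] coeff_monom_mult
        power_add[symmetric] del: One_nat_def)
  also have "\<dots> = neg3_sum n"
    unfolding neg3_sum_def
  proof (intro sum.cong refl)
    fix k assume "k \<in> {..n}"
    then have "2 * n + 1 - (n - k) = n + k + 1"
      by auto
    moreover have "(2 * n + 2 * k) choose (n + k + 1) = (2 * n + 2 * k) choose (n + k - 1)"
    proof -
      have "(2 * n + 2 * k) - (n + k + 1) = n + k - 1"
        by simp
      then show ?thesis
        using assms binomial_symmetric[of "n + k + 1" "2 * n + 2 * k"] by simp
    qed
    moreover have "\<not> 2 * n + 1 < n - k"
      by simp
    ultimately show "real (n choose k) * (if 2 * n + 1 < n - k then 0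
          else (-3) ^ (n - k) * coeff ([:1, 1:] ^ (2 * n + 2 * k)) (2 * n + 1 - (n - k)))
        = real (n choose k) * (-3) ^ (n - k) * real ((2 * n + 2 * k) choose (n + k - 1))"
      by (simp add: coeff_one_plus_X_power)
  qed
  finally show ?thesis .
qed

theorem proposition3p5:
  fixes n :: nat
  assumes "n \<ge> 1"
  shows "real (card (basketball_walks n)) =
           (1 / real n) * (\<Sum>k=1..n. (-1) ^ (k + 1) * real ((2*k - 2) choose (k - 1)) * real ((2*n) choose (n - k)))
       \<and> real (card (basketball_walks n)) =
           (1 / real n) * (\<Sum>i=0..n. real (n choose i) * real (binomz n (2 * int n + 1 - 3 * int i)))"
proof -
  have count: "real n * real (card (basketball_walks n))
      = (\<Sum>i=0..n. real (n choose i) * real (binomz n (2 * int n + 1 - 3 * int i)))"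
    using arg_cong[OF card_basketball_walks[of n], of real] by (simp add: atLeast0AtMost)
  have "(\<Sum>k=1..n. (-1) ^ (k + 1) * real ((2*k - 2) choose (k - 1)) * real ((2*n) choose (n - k)))
      = alt_sum n"
    by (simp add: alt_sum_def sum.atLeast1_atMost_eq)
  also have "\<dots> = (\<Sum>i=0..n. real (n choose i) * real (binomz n (2 * int n + 1 - 3 * int i)))"
    using alt_sum_eq_neg3_sum[OF assms] coeff_cube_product_neg3_sum[OF assms] coeff_cube_product_binomz
    by (simp add: atLeast0AtMost)
  finally show ?thesis
    using count assms by (simp add: field_simps)
qed

end
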